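(* Fix parameters $\mathfrak h=(h,\varepsilon,\theta)$ for which condition (M.1) holds. Let $w_h,v_h\in\mathbb V_h$ satisfy $$-\Delta^\diamond_{\infty,\mathfrak h}w_h(z)\le-\Delta^\diamond_{\infty,\mathfrak h}v_h(z)\qquad\forall z\in\mathcal N_h^I,$$ and assume that either $-\Delta^\diamond_{\infty,\mathfrak h}w_h(z)\le0$ for every $z\in\mathcal N_h^I$, or $-\Delta^\diamond_{\infty,\mathfrak h}v_h(z)\ge0$ for every $z\in\mathcal N_h^I$. Then $$\max_{z\in\mathcal N_h}\big[w_h(z)-v_h(z)\big]=\max_{z\in\mathcal N_h^b}\big[w_h(z)-v_h(z)\big].$$
   Context: Setting: $\Omega\subset\mathbb R^d$ ($d\ge1$) is a bounded domain with continuous boundary. For $r>0$, $\Omega^{(r)}=\{x\in\Omega:\operatorname{dist}(x,\partial\Omega)>r\}$. $\mathcal T_h$ is a mesh of closed simplices, $h=\max_T\operatorname{diam}T$, $\Omega_h$ the interior of the union of the simplices, with $\Omega^{(h)}\subset\Omega_h\subset\Omega$; $\mathcal N_h$ is the set of vertices. $\mathbb V_h$ is the space of continuous piecewise linear functions on $\mathcal T_h$ with hat basis $\{\hat\varphi_z\}_{z\in\mathcal N_h}$ ($\hat\varphi_z(z')=\delta_{zz'}$), and $\mathcal I_h$ is the Lagrange interpolant. Parameters $\mathfrak h=(h,\varepsilon,\theta)$ with $\varepsilon\in[h,\operatorname{diam}\Omega]$, $0<\theta\le1$. Interior nodes $\mathcal N_h^I=\mathcal N_h\cap\Omega^{(2\varepsilon)}$;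 boundary nodes $\mathcal N_h^b=\mathcal N_h\setminus\mathcal N_h^I$. $\mathbb S_\theta$ is a finite symmetric subset of the unit sphere $\mathbb S$ such that each $v\in\mathbb S$ has $v_\theta\in\mathbb S_\theta$ with $|v-v_\theta|\le\theta$. For $z\in\mathcal N_h^I$, $\mathcal N_{\mathfrak h}(z)=\{z\}\cup\{z+\varepsilon v_\theta:v_\theta\in\mathbb S_\theta\}$, $S^+_{\mathfrak h}w(z)=\varepsilon^{-1}(\max_{x\in\mathcal N_{\mathfrak h}(z)}w(x)-w(z))$, $S^-_{\mathfrak h}w(z)=\varepsilon^{-1}(w(z)-\min_{x\in\mathcal N_{\mathfrak h}(z)}w(x))$, and $-\Delta^\diamond_{\infty,\mathfrak h}w(z)=-\varepsilon^{-1}(S^+_{\mathfrak h}\mathcal I_hw(z)-S^-_{\mathfrak h}\mathcal I_hw(z))$. Also $\widetilde{\mathcal N}_{\mathfrak h}(z)=\{z\}\cup\{z'\in\mathcal N_h:\exists v_\theta\in\mathbb S_\theta,\ \hat\varphi_{z'}(z+\varepsilon v_\theta)>0\}$. Condition (M.1): for every nonempty $S\subset\mathcal N_h^I$ there exist $z\in S$ and $z'\in\mathcal N_h\setminus S$ with $z'\in\widetilde{\mathcal N}_{\mathfrak h}(z)$. *)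

theory Defs
  imports "HOL-Analysis.Analysis"
begin

text \<open>Domain with continuous boundary: locally, after choosing a unit direction nu,
  the domain is the subgraph of a continuous function of the coordinates
  orthogonal to nu.\<close>
definition continuous_boundary :: "'a::euclidean_space set \<Rightarrow> bool" where
  "continuous_boundary \<Omega> \<longleftrightarrow>
     (\<forall>x\<in>frontier \<Omega>. \<exists>U nu g. open U \<and> x \<in> U \<and> norm nu = 1 \<and>
        continuous_on UNIV (g :: 'a \<Rightarrow> real) \<and>
        (\<forall>y. g y = g (y - (y \<bullet> nu) *\<^sub>R nu)) \<and>
        \<Omega> \<inter> U = {y\<in>U. y \<bullet> nu < g y})"

definition bounded_domain_cb :: "'a::euclidean_space set \<Rightarrow> bool" where
  "bounded_domain_cb \<Omega> \<longleftrightarrow> open \<Omega> \<and> connected \<Omega> \<and> \<Omega> \<noteq> {} \<and> bounded \<Omega>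
      \<and> continuous_boundary \<Omega>"

definition inner_set :: "'a::euclidean_space set \<Rightarrow> real \<Rightarrow> 'a set" where
  "inner_set \<Omega> r = {x\<in>\<Omega>. infdist x (frontier \<Omega>) > r}"

definition meshsize :: "'a::euclidean_space set set \<Rightarrow> real" where
  "meshsize Th = Max (diameter ` Th)"

definition mesh_domain :: "'a::euclidean_space set set \<Rightarrow> 'a set" where
  "mesh_domain Th = interior (\<Union>Th)"

definition nodes :: "'a::euclidean_space set set \<Rightarrow> 'a set" where
  "nodes Th = (\<Union>T\<in>Th. {x. x extreme_point_of T})"

definition is_mesh :: "'a::euclidean_space set \<Rightarrow> 'a set set \<Rightarrow> bool" where
  "is_mesh \<Omega> Th \<longleftrightarrow> finite Th \<and> Th \<noteq> {} \<and>
     (\<forall>T\<in>Th. (int DIM('a)) simplex T) \<and>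
     (\<forall>T\<in>Th. \<forall>T'\<in>Th. (T \<inter> T') face_of T \<and> (T \<inter> T') face_of T') \<and>
     inner_set \<Omega> (meshsize Th) \<subseteq> mesh_domain Th \<and> mesh_domain Th \<subseteq> \<Omega>"

text \<open>Continuous piecewise linear functions (space V_h); only values on the mesh matter.\<close>
definition Vh :: "'a::euclidean_space set set \<Rightarrow> ('a \<Rightarrow> real) set" where
  "Vh Th = {f. \<forall>T\<in>Th. \<exists>a b. \<forall>x\<in>T. f x = a \<bullet> x + b}"

definition hat :: "'a::euclidean_space set set \<Rightarrow> 'a \<Rightarrow> 'a \<Rightarrow> real" where
  "hat Th z = (THE f. f \<in> Vh Th \<and>
       (\<forall>z'\<in>nodes Th. f z' = (if z' = z then 1 else 0)) \<and>
       (\<forall>x. x \<notin> \<Union>Th \<longrightarrow> f x = 0))"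

definition interp :: "'a::euclidean_space set set \<Rightarrow> ('a \<Rightarrow> real) \<Rightarrow> 'a \<Rightarrow> real" where
  "interp Th w x = (\<Sum>z\<in>nodes Th. w z * hat Th z x)"

definition sphere_net :: "real \<Rightarrow> 'a::euclidean_space set \<Rightarrow> bool" where
  "sphere_net \<theta> S \<longleftrightarrow> finite S \<and> S \<subseteq> sphere 0 1 \<and> (\<forall>v\<in>S. - v \<in> S) \<and>
     (\<forall>v. norm v = 1 \<longrightarrow> (\<exists>v\<theta>\<in>S. norm (v - v\<theta>) \<le> \<theta>))"

definition int_nodes :: "'a::euclidean_space set \<Rightarrow> 'a set set \<Rightarrow> real \<Rightarrow> 'a set" where
  "int_nodes \<Omega> Th \<epsilon> = nodes Th \<inter> inner_set \<Omega> (2 * \<epsilon>)"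

definition bd_nodes :: "'a::euclidean_space set \<Rightarrow> 'a set set \<Rightarrow> real \<Rightarrow> 'a set" where
  "bd_nodes \<Omega> Th \<epsilon> = nodes Th - int_nodes \<Omega> Th \<epsilon>"

definition stencil :: "real \<Rightarrow> 'a::euclidean_space set \<Rightarrow> 'a \<Rightarrow> 'a set" where
  "stencil \<epsilon> S z = insert z ((\<lambda>v. z + \<epsilon> *\<^sub>R v) ` S)"

definition Splus :: "real \<Rightarrow> 'a::euclidean_space set \<Rightarrow> ('a \<Rightarrow> real) \<Rightarrow> 'a \<Rightarrow> real" where
  "Splus \<epsilon> S w z = (Max (w ` stencil \<epsilon> S z) - w z) / \<epsilon>"

definition Sminus :: "real \<Rightarrow> 'a::euclidean_space set \<Rightarrow> ('a \<Rightarrow> real) \<Rightarrow> 'a \<Rightarrow> real" where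
  "Sminus \<epsilon> S w z = (w z - Min (w ` stencil \<epsilon> S z)) / \<epsilon>"

definition neg_inf_lap ::
  "'a::euclidean_space set set \<Rightarrow> real \<Rightarrow> 'a set \<Rightarrow> ('a \<Rightarrow> real) \<Rightarrow> 'a \<Rightarrow> real" where
  "neg_inf_lap Th \<epsilon> S w z =
     - (Splus \<epsilon> S (interp Th w) z - Sminus \<epsilon> S (interp Th w) z) / \<epsilon>"

definition tilde_stencil :: "'a::euclidean_space set set \<Rightarrow> real \<Rightarrow> 'a set \<Rightarrow> 'a \<Rightarrow> 'a set" where
  "tilde_stencil Th \<epsilon> S z =
     insert z {z'\<in>nodes Th. \<exists>v\<in>S. hat Th z' (z + \<epsilon> *\<^sub>R v) > 0}"

definition condition_M1 :: "'a::euclidean_space set \<Rightarrow> 'a set set \<Rightarrow> real \<Rightarrow> 'a set \<Rightarrow> bool" where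
  "condition_M1 \<Omega> Th \<epsilon> S \<longleftrightarrow>
     (\<forall>A. A \<subseteq> int_nodes \<Omega> Th \<epsilon> \<longrightarrow> A \<noteq> {} \<longrightarrow>
        (\<exists>z\<in>A. \<exists>z'\<in>nodes Th - A. z' \<in> tilde_stencil Th \<epsilon> S z))"

end

theory Submission
  imports Defs
begin

text \<open>If the maximum \<open>M\<close> of \<open>w - v\<close> over the nodes were attained only at interior nodes,
  let \<open>F\<close> be the set of those maximisers at which \<open>w\<close> is largest. Interpolants are convex
  combinations of nodal values weighted by the hat functions, so \<open>I\<^sub>h(w - v) \<le> M\<close> on the
  mesh, i.e. \<open>I\<^sub>h w\<close> touches \<open>I\<^sub>h v + M\<close> from below at every \<open>z \<in> F\<close>. This orders the
  one-sided slopes \<open>S\<^sup>\<plusminus>\<close> of \<open>I\<^sub>h w\<close> and \<open>I\<^sub>h v\<close> at \<open>z\<close>, and the operator inequality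
  forces equality. At a stencil point where \<open>I\<^sub>h w\<close> is largest, \<open>I\<^sub>h(w - v)\<close> then reaches
  \<open>M\<close>, so every node active there is a maximiser and \<open>S\<^sup>+ I\<^sub>h w(z) = 0\<close>; the sign
  condition gives \<open>S\<^sup>- I\<^sub>h w(z) = 0\<close>, so both interpolants are constant on the stencil.
  The same convexity argument now shows that every node of \<open>tilde_stencil Th \<epsilon> S z\<close>
  lies in \<open>F\<close>, contradicting (M.1). The alternative sign condition on \<open>v\<close> reduces to this case by
  passing from \<open>(w, v)\<close> to \<open>(-v, -w)\<close>.\<close>

section \<open>Affine functions on simplices\<close>

abbreviation vertices :: "'a::euclidean_space set \<Rightarrow> 'a set" where
  "vertices T \<equiv> {p. p extreme_point_of T}"

lemma affine_le_on_convex_hull: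
  fixes a a' :: "'a::real_inner"
  assumes "\<forall>p\<in>C. a \<bullet> p + b \<le> a' \<bullet> p + b'" and "x \<in> convex hull C"
  shows "a \<bullet> x + b \<le> a' \<bullet> x + b'"
proof -
  have "convex hull C \<subseteq> {y. (a - a') \<bullet> y \<le> b' - b}"
    using assms(1) by (intro hull_minimal convex_halfspace_le) (auto simp: inner_diff_left)
  then show ?thesis
    using assms(2) by (auto simp: inner_diff_left)
qed

lemma affine_eq_on_convex_hull:
  fixes a a' :: "'a::real_inner"
  assumes "\<forall>p\<in>C. a \<bullet> p + b = a' \<bullet> p + b'" and "x \<in> convex hull C"
  shows "a \<bullet> x + b = a' \<bullet> x + b'"
  using affine_le_on_convex_hull[of C a b a' b' x] affine_le_on_convex_hull[of C a' b' a b x] assms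
  by fastforce

lemma affine_interpolant_exists:
  fixes C :: "'a::euclidean_space set"
  assumes "\<not> affine_dependent C"
  obtains a b where "\<forall>p\<in>C. a \<bullet> p + b = \<phi> p"
proof (cases "C = {}")
  case True
  then show ?thesis using that by blast
next
  case False
  then obtain c where c: "c \<in> C" by blast
  have "independent ((+) (- c) ` (C - {c}))"
    using assms affine_dependent_iff_dependent2[OF c] by simp
  then obtain g where g: "linear g" "\<forall>y\<in>(+) (- c) ` (C - {c}). g y = \<phi> (c + y) - \<phi> c"
    using linear_independent_extend[OF \<open>independent _\<close>, of "\<lambda>y. \<phi> (c + y) - \<phi> c"]
    by blast
  let ?a = "adjoint g 1"
  \<comment> \<open>the vector representing the linear functional \<open>g\<close>\<close>
  have ga: "g y = ?a \<bullet> y" for y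
    using adjoint_clauses(2)[OF g(1), of 1 y] by simp
  have "?a \<bullet> p + (\<phi> c - ?a \<bullet> c) = \<phi> p" if "p \<in> C" for p
  proof (cases "p = c")
    case False
    then have "- c + p \<in> (+) (- c) ` (C - {c})" using that by blast
    then have "g (- c + p) = \<phi> (c + (- c + p)) - \<phi> c" using g(2) by blast
    then show ?thesis by (simp add: ga inner_diff_right)
  qed simp
  then show ?thesis using that by blast
qed

lemma simplex_vertices:
  assumes "n simplex T"
  shows "finite (vertices T)" "\<not> affine_dependent (vertices T)" "convex hull (vertices T) = T"
proof -
  obtain C where C: "\<not> affine_dependent C" "T = convex hull C"
    using assms unfolding simplex_def by blast
  then have "vertices T = C"
    using extreme_point_of_convex_hull_affine_independent by blast
  with C show "finite (vertices T)" "\<not> affine_dependent (vertices T)" "convex hull (vertices T) = T"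
    using aff_independent_finite by auto
qed

lemma mesh_simplex_vertices:
  assumes "is_mesh \<Omega> Th" "T \<in> Th"
  shows "finite (vertices T)" "\<not> affine_dependent (vertices T)" "convex hull (vertices T) = T"
  using assms simplex_vertices unfolding is_mesh_def by blast+

lemma finite_nodes:
  assumes "is_mesh \<Omega> Th"
  shows "finite (nodes Th)"
  using assms mesh_simplex_vertices(1)[OF assms] unfolding nodes_def is_mesh_def by auto

lemma vertex_in_nodes: "T \<in> Th \<Longrightarrow> p extreme_point_of T \<Longrightarrow> p \<in> nodes Th"
  unfolding nodes_def by auto

lemma meshsize_pos:
  assumes "is_mesh \<Omega> Th"
  shows "0 < meshsize Th"
proof -
  obtain T where T: "T \<in> Th" "int DIM('a) simplex T" and Th: "finite Th"
    using assms unfolding is_mesh_def by blast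
  then obtain C where C: "int (card C) = int DIM('a) + 1" "T = convex hull C"
    unfolding simplex_def by blast
  then have card: "2 \<le> card C" using DIM_positive[where 'a='a] by linarith
  then have "C \<noteq> {}" by auto
  then obtain p where p: "p \<in> C" by blast
  have "C \<noteq> {p}" using card by auto
  then obtain q where q: "q \<in> C" "q \<noteq> p" using p by blast
  have "p \<in> T" "q \<in> T" unfolding C(2) using p q by (simp_all add: hull_inc)
  then have "dist p q \<le> diameter T"
    using diameter_bounded_bound compact_imp_bounded[OF compact_simplex[OF T(2)]] by blast
  moreover have "0 < dist p q" using q(2) by simp
  ultimately have "0 < diameter T" by linarith
  also have "diameter T \<le> meshsize Th"
    unfolding meshsize_def by (rule Max_ge) (use Th T(1) in auto)
  finally show ?thesis .
qed

section \<open>Hat functions and interpolation\<close>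

lemma Vh_le_on_mesh:
  assumes mesh: "is_mesh \<Omega> Th" and "f \<in> Vh Th" "g \<in> Vh Th"
    and le: "\<forall>z\<in>nodes Th. f z \<le> g z" and x: "x \<in> \<Union>Th"
  shows "f x \<le> g x"
proof -
  obtain T where T: "T \<in> Th" "x \<in> T" using x by blast
  obtain a b a' b' where f: "\<forall>y\<in>T. f y = a \<bullet> y + b" and g: "\<forall>y\<in>T. g y = a' \<bullet> y + b'"
    using \<open>f \<in> Vh Th\<close> \<open>g \<in> Vh Th\<close> T(1) unfolding Vh_def by blast
  have "a \<bullet> p + b \<le> a' \<bullet> p + b'" if "p extreme_point_of T" for p
  proof -
    have "p \<in> T" using that by (simp add: extreme_point_of_def)
    then show ?thesis using f g le vertex_in_nodes[OF T(1) that] by fastforce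
  qed
  then have "\<forall>p\<in>vertices T. a \<bullet> p + b \<le> a' \<bullet> p + b'" by blast
  moreover have "x \<in> convex hull (vertices T)"
    using mesh_simplex_vertices(3)[OF mesh T(1)] T(2) by simp
  ultimately have "a \<bullet> x + b \<le> a' \<bullet> x + b'"
    by (rule affine_le_on_convex_hull)
  then show ?thesis using f g T(2) by simp
qed

lemma Vh_eq_on_mesh:
  assumes "is_mesh \<Omega> Th" "f \<in> Vh Th" "g \<in> Vh Th"
    and "\<forall>z\<in>nodes Th. f z = g z" and "x \<in> \<Union>Th"
  shows "f x = g x"
  using Vh_le_on_mesh[of \<Omega> Th f g x] Vh_le_on_mesh[of \<Omega> Th g f x] assms
  by (simp add: order_antisym)

lemma const_in_Vh: "(\<lambda>x. c) \<in> Vh Th"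
  unfolding Vh_def by (intro CollectI ballI exI[of _ 0] exI[of _ c]) simp

lemma Vh_linear_combination:
  assumes "finite I" and "\<forall>i\<in>I. f i \<in> Vh Th"
  shows "(\<lambda>x. \<Sum>i\<in>I. c i * f i x) \<in> Vh Th"
  unfolding Vh_def
proof (intro CollectI ballI)
  fix T assume "T \<in> Th"
  then have "\<forall>i\<in>I. \<exists>a b. \<forall>x\<in>T. f i x = a \<bullet> x + b"
    using assms(2) unfolding Vh_def by blast
  then obtain a b where ab: "\<forall>i\<in>I. \<forall>x\<in>T. f i x = a i \<bullet> x + b i"
    by (metis (no_types))
  have "(\<Sum>i\<in>I. c i * f i x) = (\<Sum>i\<in>I. c i *\<^sub>R a i) \<bullet> x + (\<Sum>i\<in>I. c i * b i)"
    if "x \<in> T" for x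
    using ab that by (simp add: inner_sum_left distrib_left sum.distrib)
  then show "\<exists>a b. \<forall>x\<in>T. (\<Sum>i\<in>I. c i * f i x) = a \<bullet> x + b" by blast
qed

lemma hat_function_exists:
  assumes mesh: "is_mesh \<Omega> Th"
  obtains f where "f \<in> Vh Th" "\<forall>z'\<in>nodes Th. f z' = (if z' = z then 1 else 0)"
    "\<forall>x. x \<notin> \<Union>Th \<longrightarrow> f x = 0"
proof -
  let ?\<delta> = "\<lambda>p. if p = z then 1 else 0 :: real"
  have "\<exists>a b. \<forall>p\<in>vertices T. a \<bullet> p + b = ?\<delta> p" if T: "T \<in> Th" for T
  proof -
    obtain a b where "\<forall>p\<in>vertices T. a \<bullet> p + b = ?\<delta> p"
      using affine_interpolant_exists[OF mesh_simplex_vertices(2)[OF mesh T]] .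
    then show ?thesis by blast
  qed
  then obtain a b where ab: "\<forall>T\<in>Th. \<forall>p\<in>vertices T. a T \<bullet> p + b T = ?\<delta> p"
    by (metis (no_types))
  \<comment> \<open>conformity: \<open>T \<inter> T'\<close> is a face of both, so its vertices are vertices of both\<close>
  have agree: "a T \<bullet> x + b T = a T' \<bullet> x + b T'"
    if T: "T \<in> Th" "T' \<in> Th" and x: "x \<in> T \<inter> T'" for T T' x
  proof -
    have face: "T \<inter> T' face_of T" "T \<inter> T' face_of T'"
      using mesh T unfolding is_mesh_def by blast+
    have "compact T" "compact T'" "convex T" "convex T'"
      using mesh T compact_simplex convex_simplex unfolding is_mesh_def by blast+
    then have "convex hull (vertices (T \<inter> T')) = T \<inter> T'"
      by (intro Krein_Milman_Minkowski[symmetric] compact_Int convex_Int)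
    with x have "x \<in> convex hull (vertices (T \<inter> T'))" by simp
    moreover have "a T \<bullet> p + b T = a T' \<bullet> p + b T'" if "p extreme_point_of T \<inter> T'" for p
    proof -
      have "p extreme_point_of T" "p extreme_point_of T'"
        using that extreme_point_of_face[OF face(1)] extreme_point_of_face[OF face(2)] by blast+
      then show ?thesis using ab T by simp
    qed
    ultimately show ?thesis
      by (intro affine_eq_on_convex_hull[of "vertices (T \<inter> T')"]) auto
  qed
  define f where "f x = (if x \<in> \<Union>Th then
      (let T = SOME T. T \<in> Th \<and> x \<in> T in a T \<bullet> x + b T) else 0)" for x
  have fT: "f x = a T \<bullet> x + b T" if T: "T \<in> Th" "x \<in> T" for T x
  proof -
    define T0 where "T0 = (SOME T. T \<in> Th \<and> x \<in> T)"
    have "\<exists>T. T \<in> Th \<and> x \<in> T" using T by blast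
    then have T0: "T0 \<in> Th" "x \<in> T0"
      unfolding T0_def by (metis (mono_tags, lifting) someI_ex)+
    have "f x = a T0 \<bullet> x + b T0"
      using T unfolding f_def T0_def[symmetric] by auto
    also have "\<dots> = a T \<bullet> x + b T"
      using agree T0 T by blast
    finally show ?thesis .
  qed
  show thesis
  proof
    show "f \<in> Vh Th" unfolding Vh_def using fT by blast
    show "\<forall>z'\<in>nodes Th. f z' = ?\<delta> z'"
    proof
      fix z' assume "z' \<in> nodes Th"
      then obtain T where T: "T \<in> Th" "z' extreme_point_of T" unfolding nodes_def by blast
      then have "z' \<in> T" by (simp add: extreme_point_of_def)
      then have "f z' = a T \<bullet> z' + b T" by (rule fT[OF T(1)])
      also have "\<dots> = ?\<delta> z'" using ab T by simp
      finally show "f z' = ?\<delta> z'" .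
    qed
    show "\<forall>x. x \<notin> \<Union>Th \<longrightarrow> f x = 0" by (simp add: f_def)
  qed
qed

lemma hat_function:
  assumes mesh: "is_mesh \<Omega> Th"
  shows "hat Th z \<in> Vh Th"
    and "z' \<in> nodes Th \<Longrightarrow> hat Th z z' = (if z' = z then 1 else 0)"
    and "x \<notin> \<Union>Th \<Longrightarrow> hat Th z x = 0"
proof -
  let ?P = "\<lambda>f. f \<in> Vh Th \<and> (\<forall>z'\<in>nodes Th. f z' = (if z' = z then 1 else 0)) \<and>
      (\<forall>x. x \<notin> \<Union>Th \<longrightarrow> f x = 0)"
  obtain f where f: "?P f" using hat_function_exists[OF mesh] by blast
  have "?P (THE f. ?P f)"
  proof (rule theI[of ?P f])
    show "g = f" if g: "?P g" for g
    proof
      fix x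
      show "g x = f x"
        using f g Vh_eq_on_mesh[OF mesh, of g f x] by (cases "x \<in> \<Union>Th") simp_all
    qed
  qed (fact f)
  then have P: "?P (hat Th z)" unfolding hat_def .
  then show "hat Th z \<in> Vh Th" by blast
  show "z' \<in> nodes Th \<Longrightarrow> hat Th z z' = (if z' = z then 1 else 0)" using P by blast
  show "x \<notin> \<Union>Th \<Longrightarrow> hat Th z x = 0" using P by blast
qed

lemma hat_nonneg:
  assumes "is_mesh \<Omega> Th"
  shows "0 \<le> hat Th z x"
  using Vh_le_on_mesh[OF assms const_in_Vh hat_function(1)[OF assms], of 0 z x]
    hat_function(2,3)[OF assms] by (cases "x \<in> \<Union>Th") auto

lemma sum_hat_eq_1:
  assumes mesh: "is_mesh \<Omega> Th" and x: "x \<in> \<Union>Th"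
  shows "(\<Sum>z\<in>nodes Th. hat Th z x) = 1"
proof -
  have "(\<lambda>x. \<Sum>z\<in>nodes Th. 1 * hat Th z x) \<in> Vh Th"
    using finite_nodes[OF mesh] hat_function(1)[OF mesh] by (intro Vh_linear_combination) auto
  moreover have "(\<Sum>z\<in>nodes Th. 1 * hat Th z z') = 1" if "z' \<in> nodes Th" for z'
    using that finite_nodes[OF mesh] hat_function(2)[OF mesh that] by simp
  ultimately show ?thesis
    using Vh_eq_on_mesh[OF mesh _ const_in_Vh _ x, of "\<lambda>x. \<Sum>z\<in>nodes Th. 1 * hat Th z x" 1]
    by simp
qed

lemma interp_node:
  assumes mesh: "is_mesh \<Omega> Th" and z: "z \<in> nodes Th"
  shows "interp Th f z = f z"
proof -
  have "interp Th f z = (\<Sum>z'\<in>nodes Th. if z' = z then f z' else 0)"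
    unfolding interp_def using hat_function(2)[OF mesh z] by (intro sum.cong) auto
  also have "\<dots> = f z" using finite_nodes[OF mesh] z by simp
  finally show ?thesis .
qed

lemma interp_diff: "interp Th (\<lambda>y. f y - g y) x = interp Th f x - interp Th g x"
  unfolding interp_def by (simp add: left_diff_distrib sum_subtractf)

lemma const_minus_interp:
  assumes mesh: "is_mesh \<Omega> Th" and x: "x \<in> \<Union>Th"
  shows "c - interp Th f x = (\<Sum>z\<in>nodes Th. (c - f z) * hat Th z x)"
proof -
  have "c - interp Th f x = c * (\<Sum>z\<in>nodes Th. hat Th z x) - interp Th f x"
    using sum_hat_eq_1[OF mesh x] by simp
  also have "\<dots> = (\<Sum>z\<in>nodes Th. (c - f z) * hat Th z x)"
    unfolding interp_def by (simp add: sum_distrib_left left_diff_distrib sum_subtractf)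
  finally show ?thesis .
qed

lemma interp_le:
  assumes mesh: "is_mesh \<Omega> Th" and x: "x \<in> \<Union>Th"
    and le: "\<forall>z\<in>nodes Th. 0 < hat Th z x \<longrightarrow> f z \<le> c"
  shows "interp Th f x \<le> c"
proof -
  have "0 \<le> (c - f z) * hat Th z x" if "z \<in> nodes Th" for z
    using le that hat_nonneg[OF mesh, of z x] by (cases "hat Th z x = 0") auto
  then have "0 \<le> c - interp Th f x"
    unfolding const_minus_interp[OF mesh x] by (rule sum_nonneg)
  then show ?thesis by simp
qed

lemma interp_ge_imp_active_nodes_eq:
  assumes mesh: "is_mesh \<Omega> Th" and x: "x \<in> \<Union>Th"
    and le: "\<forall>z\<in>nodes Th. 0 < hat Th z x \<longrightarrow> f z \<le> c"
    and ge: "c \<le> interp Th f x" and z: "z \<in> nodes Th" "0 < hat Th z x"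
  shows "f z = c"
proof -
  have nonneg: "\<forall>z\<in>nodes Th. 0 \<le> (c - f z) * hat Th z x"
    using le hat_nonneg[OF mesh, of _ x] by (metis mult_nonneg_nonneg diff_ge_0_iff_ge
        mult_eq_0_iff order_less_le)
  have "(\<Sum>z\<in>nodes Th. (c - f z) * hat Th z x) = 0"
    using interp_le[OF mesh x le] ge unfolding const_minus_interp[OF mesh x, symmetric] by simp
  then have "\<forall>z\<in>nodes Th. (c - f z) * hat Th z x = 0"
    using sum_nonneg_eq_0_iff[OF finite_nodes[OF mesh], of "\<lambda>z. (c - f z) * hat Th z x"] nonneg
    by simp
  then have "(c - f z) * hat Th z x = 0" using z(1) by blast
  then show ?thesis using z(2) by simp
qed

section \<open>Slopes on the stencil\<close>

lemma finite_stencil: "finite S \<Longrightarrow> finite (stencil \<epsilon> S z)"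
  unfolding stencil_def by simp

lemma center_in_stencil: "z \<in> stencil \<epsilon> S z"
  unfolding stencil_def by simp

lemma const_on_stencil_if_slopes_nonpos:
  assumes "0 < \<epsilon>" "finite S" "Splus \<epsilon> S f z \<le> 0" "Sminus \<epsilon> S f z \<le> 0"
    and x: "x \<in> stencil \<epsilon> S z"
  shows "f x = f z"
proof -
  have "Max (f ` stencil \<epsilon> S z) \<le> f z" "f z \<le> Min (f ` stencil \<epsilon> S z)"
    using assms(1,3,4) unfolding Splus_def Sminus_def by (simp_all add: divide_le_0_iff)
  moreover have "f x \<le> Max (f ` stencil \<epsilon> S z)" "Min (f ` stencil \<epsilon> S z) \<le> f x"
    using finite_stencil[OF assms(2)] x by simp_all
  ultimately show ?thesis by linarith
qed

lemma slopes_compare_if_touching: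
  assumes "0 < \<epsilon>" "finite S"
    and touch: "\<forall>x\<in>stencil \<epsilon> S z. f x - g x \<le> f z - g z"
  shows "Splus \<epsilon> S f z \<le> Splus \<epsilon> S g z" and "Sminus \<epsilon> S g z \<le> Sminus \<epsilon> S f z"
proof -
  let ?P = "stencil \<epsilon> S z"
  have P: "finite ?P" "?P \<noteq> {}" using finite_stencil[OF assms(2)] center_in_stencil by blast+
  have "Max (f ` ?P) \<in> f ` ?P" using P by simp
  then obtain p where p: "p \<in> ?P" "Max (f ` ?P) = f p" by blast
  have "g p \<le> Max (g ` ?P)" using P p(1) by simp
  then have "Max (f ` ?P) - f z \<le> Max (g ` ?P) - g z" using touch p by fastforce
  then show "Splus \<epsilon> S f z \<le> Splus \<epsilon> S g z"
    unfolding Splus_def using assms(1) by (simp add: divide_right_mono)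
  have "Min (g ` ?P) \<in> g ` ?P" using P by simp
  then obtain q where q: "q \<in> ?P" "Min (g ` ?P) = g q" by blast
  have "Min (f ` ?P) \<le> f q" using P q(1) by simp
  then have "g z - Min (g ` ?P) \<le> f z - Min (f ` ?P)" using touch q by fastforce
  then show "Sminus \<epsilon> S g z \<le> Sminus \<epsilon> S f z"
    unfolding Sminus_def using assms(1) by (simp add: divide_right_mono)
qed

lemma slopes_eq_if_touching:
  assumes "0 < \<epsilon>" "finite S"
    and "\<forall>x\<in>stencil \<epsilon> S z. f x - g x \<le> f z - g z"
    and "Splus \<epsilon> S g z - Sminus \<epsilon> S g z \<le> Splus \<epsilon> S f z - Sminus \<epsilon> S f z"
  shows "Splus \<epsilon> S f z = Splus \<epsilon> S g z" and "Sminus \<epsilon> S f z = Sminus \<epsilon> S g z"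
  using slopes_compare_if_touching[OF assms(1-3)] assms(4) by linarith+

lemma neg_inf_lap_le_iff:
  assumes "0 < \<epsilon>"
  shows "neg_inf_lap Th \<epsilon> S w z \<le> neg_inf_lap Th \<epsilon> S v z \<longleftrightarrow>
    Splus \<epsilon> S (interp Th v) z - Sminus \<epsilon> S (interp Th v) z
      \<le> Splus \<epsilon> S (interp Th w) z - Sminus \<epsilon> S (interp Th w) z"
  unfolding neg_inf_lap_def using assms by (simp add: divide_le_cancel) linarith

lemma neg_inf_lap_nonpos_iff:
  assumes "0 < \<epsilon>"
  shows "neg_inf_lap Th \<epsilon> S w z \<le> 0 \<longleftrightarrow>
    Sminus \<epsilon> S (interp Th w) z \<le> Splus \<epsilon> S (interp Th w) z"
  unfolding neg_inf_lap_def using assms by (simp add: divide_le_0_iff)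

lemma neg_inf_lap_uminus:
  assumes "finite S"
  shows "neg_inf_lap Th \<epsilon> S (\<lambda>x. - f x) z = - neg_inf_lap Th \<epsilon> S f z"
proof -
  let ?P = "stencil \<epsilon> S z" and ?U = "interp Th f"
  have P: "finite (?U ` ?P)" "?U ` ?P \<noteq> {}"
    using finite_stencil[OF assms] center_in_stencil by blast+
  have "interp Th (\<lambda>x. - f x) = (\<lambda>x. - ?U x)"
    unfolding interp_def by (simp add: sum_negf)
  moreover have "(\<lambda>x. - ?U x) ` ?P = uminus ` (?U ` ?P)" by (simp add: image_image)
  ultimately show ?thesis
    unfolding neg_inf_lap_def Splus_def Sminus_def
    by (simp add: minus_Min_eq_Max[OF P, symmetric] minus_Max_eq_Min[OF P, symmetric]
        diff_divide_distrib)
qed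

lemma stencil_subset_mesh:
  assumes mesh: "is_mesh \<Omega> Th" and "meshsize Th \<le> \<epsilon>" and S: "S \<subseteq> cball 0 1"
    and z: "z \<in> int_nodes \<Omega> Th \<epsilon>"
  shows "stencil \<epsilon> S z \<subseteq> \<Union>Th"
proof
  fix y assume y: "y \<in> stencil \<epsilon> S z"
  let ?F = "frontier \<Omega>"
  have zO: "z \<in> \<Omega>" and zd: "2 * \<epsilon> < infdist z ?F"
    using z unfolding int_nodes_def inner_set_def by auto
  have eps: "0 < \<epsilon>" using meshsize_pos[OF mesh] assms(2) by linarith
  have dzy: "dist z y \<le> \<epsilon>"
    using y S eps unfolding stencil_def by (auto simp: dist_norm mult_le_cancel_left1)
  have yO: "y \<in> \<Omega>"
  proof (rule ccontr)
    assume "y \<notin> \<Omega>"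
    then obtain p where p: "p \<in> closed_segment z y" "p \<in> ?F"
      using connected_Int_frontier[of "closed_segment z y" \<Omega>] zO by auto
    have "infdist z ?F \<le> dist z p" using infdist_le[OF p(2)] .
    also have "\<dots> \<le> dist z y" using dist_in_closed_segment[OF p(1)] by (simp add: dist_commute)
    finally show False using zd dzy eps by linarith
  qed
  have "infdist z ?F \<le> infdist y ?F + dist z y" by (rule infdist_triangle)
  then have "meshsize Th < infdist y ?F" using zd dzy assms(2) by linarith
  then have "y \<in> mesh_domain Th" using yO mesh unfolding is_mesh_def inner_set_def by blast
  then show "y \<in> \<Union>Th" unfolding mesh_domain_def using interior_subset by blast
qed

section \<open>The comparison principle\<close>

lemma Splus_interp_nonpos_at_max:
  assumes mesh: "is_mesh \<Omega> Th" and eps: "0 < \<epsilon>" and S: "finite S"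
    and P: "stencil \<epsilon> S z \<subseteq> \<Union>Th" and z: "z \<in> nodes Th"
    and max_diff: "\<forall>y\<in>nodes Th. w y - v y \<le> w z - v z"
    and max_w: "\<forall>y\<in>nodes Th. w y - v y = w z - v z \<longrightarrow> w y \<le> w z"
    and Splus_eq: "Splus \<epsilon> S (interp Th w) z = Splus \<epsilon> S (interp Th v) z"
  shows "Splus \<epsilon> S (interp Th w) z \<le> 0"
proof -
  let ?U = "interp Th w" and ?V = "interp Th v" and ?P = "stencil \<epsilon> S z"
  have Uz: "?U z = w z" and Vz: "?V z = v z" using interp_node[OF mesh z] by blast+
  have P': "finite ?P" "?P \<noteq> {}" using finite_stencil[OF S] center_in_stencil by blast+
  then have "Max (?U ` ?P) \<in> ?U ` ?P" by simp
  then obtain p where p: "p \<in> ?P" "Max (?U ` ?P) = ?U p" by blast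
  have pT: "p \<in> \<Union>Th" using P p(1) by blast
  have "?V p \<le> Max (?V ` ?P)" using P' p(1) by simp
  then have "w z - v z \<le> interp Th (\<lambda>y. w y - v y) p"
    using Splus_eq p(2) eps Uz Vz unfolding Splus_def interp_diff by simp
  then have "\<forall>y\<in>nodes Th. 0 < hat Th y p \<longrightarrow> w y \<le> w z"
    using interp_ge_imp_active_nodes_eq[OF mesh pT, of "\<lambda>y. w y - v y"] max_diff max_w
    by fastforce
  then have "?U p \<le> w z" by (rule interp_le[OF mesh pT])
  then show ?thesis unfolding Splus_def using p(2) Uz eps by (simp add: divide_le_0_iff)
qed

lemma interp_const_on_stencil_at_max:
  assumes mesh: "is_mesh \<Omega> Th" and eps: "0 < \<epsilon>" and S: "finite S"
    and P: "stencil \<epsilon> S z \<subseteq> \<Union>Th" and z: "z \<in> nodes Th"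
    and max_diff: "\<forall>y\<in>nodes Th. w y - v y \<le> w z - v z"
    and max_w: "\<forall>y\<in>nodes Th. w y - v y = w z - v z \<longrightarrow> w y \<le> w z"
    and lap: "neg_inf_lap Th \<epsilon> S w z \<le> neg_inf_lap Th \<epsilon> S v z"
    and sub: "neg_inf_lap Th \<epsilon> S w z \<le> 0"
    and x: "x \<in> stencil \<epsilon> S z"
  shows "interp Th w x = w z" and "interp Th v x = v z"
proof -
  let ?U = "interp Th w" and ?V = "interp Th v"
  have Uz: "?U z = w z" and Vz: "?V z = v z" using interp_node[OF mesh z] by blast+
  have "interp Th (\<lambda>y. w y - v y) y \<le> w z - v z" if "y \<in> stencil \<epsilon> S z" for y
    by (rule interp_le[OF mesh]) (use P that max_diff in auto)
  then have touch: "\<forall>y\<in>stencil \<epsilon> S z. ?U y - ?V y \<le> ?U z - ?V z"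
    using Uz Vz by (simp add: interp_diff)
  have Splus_eq: "Splus \<epsilon> S ?U z = Splus \<epsilon> S ?V z"
    and Sminus_eq: "Sminus \<epsilon> S ?U z = Sminus \<epsilon> S ?V z"
    using slopes_eq_if_touching[OF eps S touch] lap neg_inf_lap_le_iff[OF eps] by blast+
  have "Splus \<epsilon> S ?U z \<le> 0"
    by (rule Splus_interp_nonpos_at_max[OF mesh eps S P z max_diff max_w Splus_eq])
  moreover have "Sminus \<epsilon> S ?U z \<le> 0"
    using calculation sub unfolding neg_inf_lap_nonpos_iff[OF eps] by linarith
  ultimately show "?U x = w z" "?V x = v z"
    using const_on_stencil_if_slopes_nonpos[OF eps S _ _ x, of ?U]
      const_on_stencil_if_slopes_nonpos[OF eps S _ _ x, of ?V] Splus_eq Sminus_eq Uz Vz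
    by simp_all
qed

lemma max_node_propagates:
  assumes mesh: "is_mesh \<Omega> Th" and eps: "0 < \<epsilon>" and S: "finite S"
    and P: "stencil \<epsilon> S z \<subseteq> \<Union>Th" and z: "z \<in> nodes Th"
    and max_diff: "\<forall>y\<in>nodes Th. w y - v y \<le> w z - v z"
    and max_w: "\<forall>y\<in>nodes Th. w y - v y = w z - v z \<longrightarrow> w y \<le> w z"
    and lap: "neg_inf_lap Th \<epsilon> S w z \<le> neg_inf_lap Th \<epsilon> S v z"
    and sub: "neg_inf_lap Th \<epsilon> S w z \<le> 0"
    and z': "z' \<in> nodes Th" "z' \<in> tilde_stencil Th \<epsilon> S z"
  shows "w z' - v z' = w z - v z" and "w z' = w z"
proof -
  have "w z' - v z' = w z - v z \<and> w z' = w z"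
  proof (cases "z' = z")
    case False
    then obtain s where s: "s \<in> S" "0 < hat Th z' (z + \<epsilon> *\<^sub>R s)"
      using z'(2) unfolding tilde_stencil_def by blast
    let ?x = "z + \<epsilon> *\<^sub>R s"
    have x: "?x \<in> stencil \<epsilon> S z" using s(1) unfolding stencil_def by blast
    then have xT: "?x \<in> \<Union>Th" using P by blast
    note const = interp_const_on_stencil_at_max[OF mesh eps S P z max_diff max_w lap sub x]
    have "w z - v z \<le> interp Th (\<lambda>y. w y - v y) ?x"
      using const by (simp add: interp_diff)
    then have active: "\<forall>y\<in>nodes Th. 0 < hat Th y ?x \<longrightarrow> w y - v y = w z - v z"
      using interp_ge_imp_active_nodes_eq[OF mesh xT, of "\<lambda>y. w y - v y"] max_diff by blast
    moreover have "w z' = w z"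
      using interp_ge_imp_active_nodes_eq[OF mesh xT, of w "w z" z'] active max_w const z' s(2)
      by simp
    ultimately show ?thesis using z'(1) s(2) by blast
  qed simp
  then show "w z' - v z' = w z - v z" and "w z' = w z" by blast+
qed

lemma Max_image_eq_on_subset:
  fixes f :: "'b \<Rightarrow> 'c::linorder"
  assumes "finite A" "B \<subseteq> A" "b \<in> B" "f b = Max (f ` A)"
  shows "Max (f ` B) = Max (f ` A)"
proof (rule antisym)
  show "Max (f ` B) \<le> Max (f ` A)" using assms(1-3) by (intro Max_mono) auto
  have "finite B" using assms(1,2) finite_subset by blast
  then have "f b \<le> Max (f ` B)" using assms(3) by simp
  then show "Max (f ` A) \<le> Max (f ` B)" using assms(4) by simp
qed

lemma max_principle_subsolution:
  assumes mesh: "is_mesh \<Omega> Th" and eps: "0 < \<epsilon>" and S: "finite S"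
    and P: "\<forall>z\<in>int_nodes \<Omega> Th \<epsilon>. stencil \<epsilon> S z \<subseteq> \<Union>Th"
    and M1: "condition_M1 \<Omega> Th \<epsilon> S"
    and lap: "\<forall>z\<in>int_nodes \<Omega> Th \<epsilon>. neg_inf_lap Th \<epsilon> S w z \<le> neg_inf_lap Th \<epsilon> S v z"
    and sub: "\<forall>z\<in>int_nodes \<Omega> Th \<epsilon>. neg_inf_lap Th \<epsilon> S w z \<le> 0"
  shows "Max ((\<lambda>z. w z - v z) ` nodes Th) = Max ((\<lambda>z. w z - v z) ` bd_nodes \<Omega> Th \<epsilon>)"
proof (cases "int_nodes \<Omega> Th \<epsilon> = {}")
  case True
  then show ?thesis unfolding bd_nodes_def by simp
next
  case False
  let ?N = "nodes Th" and ?I = "int_nodes \<Omega> Th \<epsilon>" and ?B = "bd_nodes \<Omega> Th \<epsilon>"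
  let ?D = "\<lambda>z. w z - v z"
  have N: "finite ?N" "?N \<noteq> {}"
    using finite_nodes[OF mesh] False unfolding int_nodes_def by auto
  define M where "M = Max (?D ` ?N)"
  define E where "E = {z\<in>?N. ?D z = M}"
  define F where "F = {z\<in>E. w z = Max (w ` E)}"
  have "M \<in> ?D ` ?N" unfolding M_def using N by simp
  then have E: "finite E" "E \<noteq> {}" unfolding E_def using N(1) by auto
  then have "Max (w ` E) \<in> w ` E" by (intro Max_in) auto
  then obtain e where "e \<in> E" "w e = Max (w ` E)" by (metis imageE)
  then have "F \<noteq> {}" unfolding F_def by blast
  have F_closed: "z' \<in> F"
    if z: "z \<in> F" "z \<in> ?I" and z': "z' \<in> ?N" "z' \<in> tilde_stencil Th \<epsilon> S z" for z z'
  proof -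
    have zE: "z \<in> E" "z \<in> ?N" using z(1) unfolding F_def E_def by auto
    have max_diff: "\<forall>y\<in>?N. ?D y \<le> ?D z" using zE N(1) unfolding E_def M_def by simp
    have max_w: "\<forall>y\<in>?N. ?D y = ?D z \<longrightarrow> w y \<le> w z"
      using z(1) E(1) unfolding F_def E_def by auto
    have zP: "stencil \<epsilon> S z \<subseteq> \<Union>Th" using P z(2) by blast
    note propagate = max_node_propagates[OF mesh eps S zP zE(2) max_diff max_w
        lap[rule_format, OF z(2)] sub[rule_format, OF z(2)] z']
    show ?thesis
      using propagate z(1) z'(1) unfolding F_def E_def by simp
  qed
  have "\<not> F \<subseteq> ?I"
  proof
    assume FI: "F \<subseteq> ?I"
    then have "\<exists>z\<in>F. \<exists>z'\<in>?N - F. z' \<in> tilde_stencil Th \<epsilon> S z"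
      using M1 \<open>F \<noteq> {}\<close> unfolding condition_M1_def by blast
    then obtain z z' where "z \<in> F" "z' \<in> ?N - F" "z' \<in> tilde_stencil Th \<epsilon> S z" by blast
    then show False using F_closed[of z z'] FI by blast
  qed
  then obtain b where "b \<in> F" "b \<notin> ?I" by blast
  then have "b \<in> ?B" "?D b = M" unfolding F_def E_def bd_nodes_def by auto
  then show ?thesis
    unfolding M_def using N(1) by (intro Max_image_eq_on_subset[symmetric]) (auto simp: bd_nodes_def)
qed

theorem theorem3p3:
  fixes \<Omega> :: "'a::euclidean_space set" and Th :: "'a set set"
    and \<epsilon> \<theta> :: real and S :: "'a set" and w v :: "'a \<Rightarrow> real"
  assumes "bounded_domain_cb \<Omega>"
    and "is_mesh \<Omega> Th"
    and "meshsize Th \<le> \<epsilon>" and "\<epsilon> \<le> diameter \<Omega>"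
    and "0 < \<theta>" and "\<theta> \<le> 1"
    and "sphere_net \<theta> S"
    and "condition_M1 \<Omega> Th \<epsilon> S"
    and "w \<in> Vh Th" and "v \<in> Vh Th"
    and "\<forall>z\<in>int_nodes \<Omega> Th \<epsilon>. neg_inf_lap Th \<epsilon> S w z \<le> neg_inf_lap Th \<epsilon> S v z"
    and "(\<forall>z\<in>int_nodes \<Omega> Th \<epsilon>. neg_inf_lap Th \<epsilon> S w z \<le> 0) \<or>
         (\<forall>z\<in>int_nodes \<Omega> Th \<epsilon>. neg_inf_lap Th \<epsilon> S v z \<ge> 0)"
  shows "Max ((\<lambda>z. w z - v z) ` nodes Th) = Max ((\<lambda>z. w z - v z) ` bd_nodes \<Omega> Th \<epsilon>)"
proof -
  \<comment> \<open>only nodal values enter, so \<open>w, v \<in> Vh Th\<close> is not needed; neither are the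
    regularity of \<open>\<Omega>\<close>, the bound \<open>\<epsilon> \<le> diameter \<Omega>\<close> and the bounds on \<open>\<theta>\<close>\<close>
  note mesh = assms(2) and M1 = assms(8) and lap = assms(11)
  have eps: "0 < \<epsilon>" using meshsize_pos[OF mesh] assms(3) by linarith
  have S: "finite S" "S \<subseteq> cball 0 1" using assms(7) unfolding sphere_net_def by auto
  have P: "\<forall>z\<in>int_nodes \<Omega> Th \<epsilon>. stencil \<epsilon> S z \<subseteq> \<Union>Th"
    using stencil_subset_mesh[OF mesh assms(3) S(2)] by blast
  from assms(12) show ?thesis
  proof
    assume "\<forall>z\<in>int_nodes \<Omega> Th \<epsilon>. neg_inf_lap Th \<epsilon> S w z \<le> 0"
    then show ?thesis by (rule max_principle_subsolution[OF mesh eps S(1) P M1 lap])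
  next
    assume "\<forall>z\<in>int_nodes \<Omega> Th \<epsilon>. 0 \<le> neg_inf_lap Th \<epsilon> S v z"
    then have "Max ((\<lambda>z. - v z - - w z) ` nodes Th) =
        Max ((\<lambda>z. - v z - - w z) ` bd_nodes \<Omega> Th \<epsilon>)"
      using lap by (intro max_principle_subsolution[OF mesh eps S(1) P M1])
        (simp_all add: neg_inf_lap_uminus[OF S(1)])
    then show ?thesis by simp
  qed
qed

end
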